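(* Let $\mathbf{f}$ be a simple problem and $\mathbf{g}\subsetneq\mathbf{f}$ a proper subproblem. Then $\partial X^*(\mathbf{f})\supseteq X^*(\mathbf{g})$.
   Context: A problem is a finite set $\mathbf{f}=\{f_1,\dots,f_m\}$ of functions $f_i:\mathbb{R}^n\to\mathbb{R}$ together with a feasible region $X\subseteq\mathbb{R}^n$, to be minimized simultaneously. A subproblem $\mathbf{g}\subseteq\mathbf{f}$ is a subset of these functions (including $\emptyset$ and $\mathbf{f}$), with the same $X$; its evaluation map is $x\mapsto(f_i(x))_{f_i\in\mathbf{g}}\in\mathbb{R}^{|\mathbf{g}|}$. The Pareto set $X^*(\mathbf{g})$ is the set of $x^*\in X$ for which there is no $x\in X$ with $f_i(x)\le f_i(x^* )$ for all $f_i\in\mathbf{g}$ and $f_j(x)<f_j(x^* )$ for some $f_j\in\mathbf{g}$; by convention $X^*(\emptyset)=\emptyset$. A problem $\mathbf{f}$ is simple if every subproblem $\mathbf{g}\subseteq\mathbf{f}$ with $k=|\mathbf{g}|$ objectives satisfies: (S1) $X^*(\mathbf{g})$ is homeomorphic to $\Delta^{k-1}=\{t\in[0,1]^k:\sum t_i=1\}$ (with $\Delta^{-1}=\emptyset$); (S2) the evaluation map of $\mathbf{g}$ restricted to $X^*(\mathbf{g})$ is a topological embedding into $\mathbb{R}^k$. For a simple problem, $X^*(\mathbf{f})$ is homeomorphic to a simplex, hence a topological manifold with boundary; $\partial$ denotes its manifold boundary (empty for a single point). All sets carry the subspace topology from Euclidean space. *)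

theory Defs
  imports "HOL-Analysis.Analysis"
begin

text \<open>Euclidean k-space, realised as the finitely supported sequences
  vanishing from index k on, with the (product = Euclidean) topology.\<close>
definition Rk :: "nat \<Rightarrow> (nat \<Rightarrow> real) set" where
  "Rk k = {v. \<forall>i\<ge>k. v i = 0}"

text \<open>Standard simplex Delta^(k-1) in R^k (empty for k = 0).\<close>
definition std_simplex :: "nat \<Rightarrow> (nat \<Rightarrow> real) set" where
  "std_simplex k = {t. (\<forall>i<k. 0 \<le> t i \<and> t i \<le> 1) \<and> (\<forall>i\<ge>k. t i = 0) \<and> (\<Sum>i<k. t i) = 1}"

definition pareto_set :: "'a set \<Rightarrow> ('a \<Rightarrow> real) set \<Rightarrow> 'a set" where
  "pareto_set X G = (if G = {} then {} else
     {xs \<in> X. \<not> (\<exists>x\<in>X. (\<forall>f\<in>G. f x \<le> f xs) \<and> (\<exists>f\<in>G. f x < f xs))})"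

text \<open>Evaluation map of G: x maps to (g x) for g in G (coordinates outside G are 0),
  valued in R^G with the product topology.\<close>
definition eval_map :: "('a \<Rightarrow> real) set \<Rightarrow> 'a \<Rightarrow> (('a \<Rightarrow> real) \<Rightarrow> real)" where
  "eval_map G x = (\<lambda>g. if g \<in> G then g x else 0)"

definition topological_embedding_on :: "'a::topological_space set \<Rightarrow> ('a \<Rightarrow> 'b::topological_space) \<Rightarrow> bool" where
  "topological_embedding_on S e \<longleftrightarrow> (\<exists>h. homeomorphism S (e ` S) e h)"

definition simple_problem :: "'a::euclidean_space set \<Rightarrow> ('a \<Rightarrow> real) set \<Rightarrow> bool" where
  "simple_problem X F \<longleftrightarrow> finite F \<and>
     (\<forall>G\<subseteq>F. pareto_set X G homeomorphic std_simplex (card G) \<and>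
              topological_embedding_on (pareto_set X G) (eval_map G))"

definition manifold_interior :: "'a::topological_space set \<Rightarrow> 'a set" where
  "manifold_interior S = {x \<in> S. \<exists>U. openin (top_of_set S) U \<and> x \<in> U \<and>
     (\<exists>k V. openin (top_of_set (Rk k)) V \<and> U homeomorphic V)}"

definition manifold_boundary :: "'a::topological_space set \<Rightarrow> 'a set" where
  "manifold_boundary S = S - manifold_interior S"

end

theory Submission
  imports Defs "HOL-Homology.Homology"
begin

text \<open>Pick an objective \<open>j \<in> F - G\<close>. On the Pareto set \<open>P\<close> of \<open>F\<close>, two points that agree on
  \<open>F - {j}\<close> also agree on \<open>j\<close> (otherwise one would dominate the other), so evaluating the
  \<open>n = |F| - 1\<close> objectives of \<open>F - {j}\<close> is a continuous injection \<open>P \<rightarrow> \<real>\<^sup>n\<close>. If a point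
  \<open>x\<close> of the Pareto set of \<open>G\<close> had a Euclidean chart \<open>U \<cong> V \<subseteq> \<real>\<^sup>k\<close> in \<open>P\<close>, then
  \<open>n \<le> k\<close> because \<open>P \<cong> \<Delta>\<^sup>n\<close> contains open pieces of \<open>\<real>\<^sup>n\<close>, and invariance of domain
  makes the image of \<open>U\<close> open in \<open>\<real>\<^sup>n\<close>. So \<open>U\<close> contains a point that is strictly better
  than \<open>x\<close> in one objective of \<open>G\<close> and no worse in the others, contradicting optimality.\<close>

lemma homeomorphism_inj_on: "homeomorphism S T f g \<Longrightarrow> inj_on f S"
  by (metis homeomorphism_apply1 inj_on_inverseI)

lemma Euclidean_space_eq_top_of_set_Rk: "Euclidean_space k = top_of_set (Rk k)"
  by (simp add: Euclidean_space_def euclidean_product_topology Rk_def)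

lemma Rk_mono: "k \<le> n \<Longrightarrow> Rk k \<subseteq> Rk n"
  by (auto simp: Rk_def)

lemma continuous_map_Euclidean_space_subtopologyI:
  assumes "continuous_on W f" "W \<subseteq> Rk n" "f ` W \<subseteq> Rk m"
  shows "continuous_map (subtopology (Euclidean_space n) W) (Euclidean_space m) f"
  using assms
  by (simp add: Euclidean_space_eq_top_of_set_Rk subtopology_subtopology Int_absorb1
      continuous_map_in_subtopology image_subset_iff)

lemma continuous_curve_stays_in_open:
  fixes \<gamma> :: "real \<Rightarrow> 'b::topological_space"
  assumes "continuous_on UNIV \<gamma>" "open T" "\<gamma> 0 \<in> T"
  obtains e where "e > 0" "\<And>t. \<bar>t\<bar> < e \<Longrightarrow> \<gamma> t \<in> T"
proof -
  have "open (\<gamma> -` T)" "0 \<in> \<gamma> -` T"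
    using assms open_vimage by auto
  then obtain e where "e > 0" "ball 0 e \<subseteq> \<gamma> -` T"
    using open_contains_ball by blast
  then show ?thesis
    using that by (auto simp: dist_real_def subset_iff)
qed

lemma openin_Rk_decrease_coordinate:
  assumes "openin (top_of_set (Rk n)) S" "y \<in> S" "a < n"
  obtains t where "t < 0" "y(a := y a + t) \<in> S"
proof -
  obtain T where T: "open T" "S = Rk n \<inter> T"
    using assms(1) openin_open by blast
  define \<gamma> where "\<gamma> t = y(a := y a + t)" for t
  have "continuous_on UNIV \<gamma>"
    unfolding \<gamma>_def fun_upd_def
  proof (intro continuous_on_coordinatewise_then_product)
    show "continuous_on UNIV (\<lambda>t. if i = a then y a + t else y i)" for i
      by (cases "i = a") (auto intro!: continuous_intros)
  qed
  moreover have "\<gamma> 0 \<in> T"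
    using assms T by (simp add: \<gamma>_def)
  ultimately obtain e where e: "e > 0" "\<And>t. \<bar>t\<bar> < e \<Longrightarrow> \<gamma> t \<in> T"
    using continuous_curve_stays_in_open T(1) by blast
  have "\<gamma> (- e/2) \<in> T"
    using e by simp
  moreover have "\<gamma> (- e/2) \<in> Rk n"
    using assms T by (auto simp: \<gamma>_def Rk_def)
  ultimately show ?thesis
    using that[of "- e/2"] e(1) T(2) unfolding \<gamma>_def by simp
qed

lemma inj_on_openin_Rk_imp_dim_le:
  assumes W: "openin (top_of_set (Rk n)) W" "W \<noteq> {}"
    and f: "continuous_on W f" "inj_on f W" "f ` W \<subseteq> Rk k"
  shows "n \<le> k"
proof (rule ccontr)
  assume "\<not> n \<le> k"
  then have "k < n" by simp
  then have fW: "f ` W \<subseteq> Rk n"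
    using f(3) Rk_mono[of k n] \<open>k < n\<close> by auto
  have "openin (Euclidean_space n) (f ` W)"
  proof (rule invariance_of_domain_Euclidean_space)
    show "openin (Euclidean_space n) W"
      using W(1) by (simp add: Euclidean_space_eq_top_of_set_Rk)
    show "continuous_map (subtopology (Euclidean_space n) W) (Euclidean_space n) f"
      using f(1) openin_imp_subset[OF W(1)] fW by (rule continuous_map_Euclidean_space_subtopologyI)
  qed (rule f(2))
  then have "openin (top_of_set (Rk n)) (f ` W)"
    by (simp add: Euclidean_space_eq_top_of_set_Rk)
  moreover obtain w where "w \<in> W"
    using W(2) by blast
  moreover have "n - 1 < n"
    using \<open>k < n\<close> by simp
  ultimately obtain t where t: "t < 0" "(f w)(n - 1 := f w (n - 1) + t) \<in> f ` W"
    by (blast intro: openin_Rk_decrease_coordinate)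
  have "f w \<in> Rk k" "(f w)(n - 1 := f w (n - 1) + t) \<in> Rk k"
    using f(3) \<open>w \<in> W\<close> t(2) by blast+
  moreover have "k \<le> n - 1"
    using \<open>k < n\<close> by simp
  ultimately have "f w (n - 1) = 0" "f w (n - 1) + t = 0"
    unfolding Rk_def by (auto dest!: spec[of _ "n - 1"])
  with t(1) show False
    by simp
qed

lemma std_simplex_openin_positive_point:
  assumes "openin (top_of_set (std_simplex m)) S" "p \<in> S"
  obtains q where "q \<in> S" "\<forall>i<m. 0 < q i"
proof -
  obtain T where T: "open T" "S = std_simplex m \<inter> T"
    using assms(1) openin_open by blast
  have p: "\<forall>i<m. 0 \<le> p i \<and> p i \<le> 1" "\<forall>i\<ge>m. p i = 0" "(\<Sum>i<m. p i) = 1"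
    using assms(2) T(2) by (auto simp: std_simplex_def)
  then have "m > 0"
    by (cases m) auto
  define c where "c i = (if i < m then 1 / real m else 0)" for i
  have c: "\<forall>i<m. 0 < c i \<and> c i \<le> 1" "\<forall>i\<ge>m. c i = 0" "(\<Sum>i<m. c i) = 1"
    using \<open>m > 0\<close> by (auto simp: c_def)
  define \<gamma> where "\<gamma> s = (\<lambda>i. (1 - s) * p i + s * c i)" for s :: real
  have "continuous_on UNIV \<gamma>"
    unfolding \<gamma>_def by (intro continuous_on_coordinatewise_then_product continuous_intros)
  moreover have "\<gamma> 0 \<in> T"
    using assms(2) T(2) by (simp add: \<gamma>_def)
  ultimately obtain e where e: "e > 0" "\<And>s. \<bar>s\<bar> < e \<Longrightarrow> \<gamma> s \<in> T"
    using continuous_curve_stays_in_open T(1) by blast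
  define s where "s = min (e/2) (1/2)"
  have s: "0 < s" "s < 1" "\<gamma> s \<in> T"
    using e by (auto simp: s_def)
  have pos: "\<forall>i<m. 0 < \<gamma> s i"
    using p(1) c(1) s(1,2) by (auto simp: \<gamma>_def intro: add_nonneg_pos)
  have "\<forall>i<m. \<gamma> s i \<le> 1"
    using p(1) c(1) s(1,2) unfolding \<gamma>_def by (auto intro: convex_bound_le)
  moreover have "\<forall>i\<ge>m. \<gamma> s i = 0"
    using p(2) c(2) by (simp add: \<gamma>_def)
  moreover have "(\<Sum>i<m. \<gamma> s i) = 1"
    using p(3) c(3) by (simp add: \<gamma>_def sum.distrib flip: sum_distrib_left)
  ultimately have "\<gamma> s \<in> std_simplex m"
    using pos by (auto simp: std_simplex_def less_imp_le)
  then show ?thesis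
    using that s(3) pos T(2) by blast
qed

lemma std_simplex_openin_contains_Rk_chart:
  assumes "openin (top_of_set (std_simplex (Suc n))) S" "S \<noteq> {}"
  obtains W \<sigma> where "openin (top_of_set (Rk n)) W" "W \<noteq> {}"
    "continuous_on W \<sigma>" "inj_on \<sigma> W" "\<sigma> ` W \<subseteq> S"
proof -
  obtain T where T: "open T" "S = std_simplex (Suc n) \<inter> T"
    using assms(1) openin_open by blast
  obtain q where q: "q \<in> S" "\<forall>i<Suc n. 0 < q i"
    using assms std_simplex_openin_positive_point by blast
  define \<sigma> where
    "\<sigma> s = (\<lambda>i. if i < n then s i else if i = n then 1 - (\<Sum>l<n. s l) else 0)" for s :: "nat \<Rightarrow> real"
  define W where "W = {s \<in> Rk n. (\<forall>i<n. 0 < s i) \<and> (\<Sum>l<n. s l) < 1 \<and> \<sigma> s \<in> T}"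
  have \<sigma>_cont: "continuous_on UNIV \<sigma>"
    unfolding \<sigma>_def
  proof (intro continuous_on_coordinatewise_then_product)
    show "continuous_on UNIV (\<lambda>s::nat \<Rightarrow> real. if i < n then s i else if i = n then 1 - (\<Sum>l<n. s l) else 0)" for i
      by (cases "i < n"; cases "i = n") (auto intro!: continuous_intros)
  qed
  have "openin (top_of_set (Rk n)) W"
  proof -
    have "W = Rk n \<inter> ((\<Inter>i<n. {s. 0 < s i}) \<inter> {s. (\<Sum>l<n. s l) < 1} \<inter> \<sigma> -` T)"
      by (auto simp: W_def)
    moreover have "open ((\<Inter>i<n. {s::nat \<Rightarrow> real. 0 < s i}) \<inter> {s. (\<Sum>l<n. s l) < 1} \<inter> \<sigma> -` T)"
      by (intro open_Int open_INT ballI open_vimage \<sigma>_cont T(1) finite_lessThan open_Collect_less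
          continuous_intros continuous_on_product_coordinates)
    ultimately show ?thesis
      using openin_open_Int by metis
  qed
  moreover have "(\<lambda>i. if i < n then q i else 0) \<in> W"
  proof -
    have "q \<in> std_simplex (Suc n)" "q \<in> T"
      using q(1) T(2) by auto
    then have "(\<Sum>l<n. q l) + q n = 1" "\<forall>i>n. q i = 0"
      by (auto simp: std_simplex_def)
    then have "\<sigma> (\<lambda>i. if i < n then q i else 0) = q"
      by (auto simp: \<sigma>_def fun_eq_iff)
    with \<open>q \<in> T\<close> \<open>(\<Sum>l<n. q l) + q n = 1\<close> q(2) show ?thesis
      by (auto simp: W_def Rk_def)
  qed
  moreover have "continuous_on W \<sigma>"
    using \<sigma>_cont continuous_on_subset by blast
  moreover have "inj_on \<sigma> W"
  proof (rule inj_onI)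
    fix s s' assume "s \<in> W" "s' \<in> W" "\<sigma> s = \<sigma> s'"
    show "s = s'"
    proof
      show "s i = s' i" for i
        using fun_cong[OF \<open>\<sigma> s = \<sigma> s'\<close>, of i] \<open>s \<in> W\<close> \<open>s' \<in> W\<close>
        by (cases "i < n") (auto simp: \<sigma>_def W_def Rk_def)
    qed
  qed
  moreover have "\<sigma> s \<in> S" if "s \<in> W" for s
  proof -
    have pos: "\<forall>i<n. 0 < s i" and sum: "(\<Sum>l<n. s l) < 1" and "\<sigma> s \<in> T"
      using that by (auto simp: W_def)
    have "0 \<le> (\<Sum>l<n. s l)"
      using pos by (auto intro: sum_nonneg less_imp_le)
    moreover have "s i \<le> 1" if "i < n" for i
    proof -
      have "s i \<le> (\<Sum>l<n. s l)"
        using that pos by (intro member_le_sum) (auto intro: less_imp_le)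
      with sum show ?thesis
        by simp
    qed
    moreover have "(\<Sum>i<Suc n. \<sigma> s i) = 1"
      by (simp add: \<sigma>_def)
    ultimately have "\<sigma> s \<in> std_simplex (Suc n)"
      using pos sum unfolding std_simplex_def
      by (auto simp: \<sigma>_def less_Suc_eq less_imp_le sum_nonneg)
    with \<open>\<sigma> s \<in> T\<close> show ?thesis
      using T(2) by blast
  qed
  ultimately show ?thesis
    using that by blast
qed

lemma homeomorphic_std_simplex_openin_dim_le:
  assumes "S homeomorphic std_simplex (Suc n)" "openin (top_of_set S) U" "U \<noteq> {}"
    and "U homeomorphic V" "V \<subseteq> Rk k"
  shows "n \<le> k"
proof -
  obtain \<phi> \<phi>' where \<phi>: "homeomorphism S (std_simplex (Suc n)) \<phi> \<phi>'"
    using assms(1) homeomorphic_def by blast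
  have "openin (top_of_set (std_simplex (Suc n))) (\<phi> ` U)"
    using homeomorphism_imp_open_map[OF \<phi> assms(2)] .
  then obtain W \<sigma> where W: "openin (top_of_set (Rk n)) W" "W \<noteq> {}"
    and \<sigma>: "continuous_on W \<sigma>" "inj_on \<sigma> W" "\<sigma> ` W \<subseteq> \<phi> ` U"
    using assms(3) std_simplex_openin_contains_Rk_chart by blast
  have "U homeomorphic \<phi> ` U"
    using homeomorphism_of_subsets[OF \<phi> openin_imp_subset[OF assms(2)] order_refl refl]
    by (auto simp: homeomorphic_def)
  then have "\<phi> ` U homeomorphic V"
    using assms(4) homeomorphic_sym homeomorphic_trans by blast
  then obtain g g' where g: "homeomorphism (\<phi> ` U) V g g'"
    using homeomorphic_def by blast
  show ?thesis
  proof (rule inj_on_openin_Rk_imp_dim_le[OF W])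
    show "continuous_on W (g \<circ> \<sigma>)"
      using continuous_on_compose[OF \<sigma>(1)] continuous_on_subset[OF homeomorphism_cont1[OF g] \<sigma>(3)]
      by blast
    show "inj_on (g \<circ> \<sigma>) W"
      using comp_inj_on[OF \<sigma>(2)] inj_on_subset[OF homeomorphism_inj_on[OF g] \<sigma>(3)] by blast
    show "(g \<circ> \<sigma>) ` W \<subseteq> Rk k"
      using \<sigma>(3) homeomorphism_image1[OF g] assms(5) by (auto simp: image_subset_iff)
  qed
qed

lemma manifold_interior_inj_image_openin:
  assumes "S homeomorphic std_simplex (Suc n)" "continuous_on S h" "inj_on h S" "h ` S \<subseteq> Rk n"
    and "x \<in> manifold_interior S"
  obtains U where "U \<subseteq> S" "x \<in> U" "openin (top_of_set (Rk n)) (h ` U)"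
proof -
  obtain U k V where U: "openin (top_of_set S) U" "x \<in> U"
    and V: "openin (top_of_set (Rk k)) V" and "U homeomorphic V"
    using assms(5) unfolding manifold_interior_def by blast
  then obtain a b where ab: "homeomorphism U V a b"
    using homeomorphic_def by blast
  have "U \<subseteq> S" "V \<subseteq> Rk k"
    using U(1) V openin_imp_subset by blast+
  have "n \<le> k"
    using homeomorphic_std_simplex_openin_dim_le[OF assms(1) U(1)] U(2)
      \<open>U homeomorphic V\<close> \<open>V \<subseteq> Rk k\<close> by blast
  have "openin (Euclidean_space n) ((h \<circ> b) ` V)"
  proof (rule invariance_of_domain_Euclidean_space_gen[OF \<open>n \<le> k\<close>])
    show "openin (Euclidean_space k) V"
      using V by (simp add: Euclidean_space_eq_top_of_set_Rk)
    have "continuous_on V (h \<circ> b)"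
      using continuous_on_compose[OF homeomorphism_cont2[OF ab]] homeomorphism_image2[OF ab]
        continuous_on_subset[OF assms(2) \<open>U \<subseteq> S\<close>] by simp
    moreover note \<open>V \<subseteq> Rk k\<close>
    moreover have "(h \<circ> b) ` V \<subseteq> Rk n"
      using homeomorphism_image2[OF ab] \<open>U \<subseteq> S\<close> assms(4) by (auto simp: image_subset_iff)
    ultimately show "continuous_map (subtopology (Euclidean_space k) V) (Euclidean_space n) (h \<circ> b)"
      by (rule continuous_map_Euclidean_space_subtopologyI)
    show "inj_on (h \<circ> b) V"
      using comp_inj_on[OF homeomorphism_inj_on[OF homeomorphism_symD[OF ab]]]
        homeomorphism_image2[OF ab] inj_on_subset[OF assms(3) \<open>U \<subseteq> S\<close>] by simp
  qed
  moreover have "(h \<circ> b) ` V = h ` U"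
    using homeomorphism_image2[OF ab] by (metis image_comp)
  ultimately show ?thesis
    using that \<open>U \<subseteq> S\<close> U(2) by (simp add: Euclidean_space_eq_top_of_set_Rk)
qed

lemma mem_pareto_set_iff:
  "x \<in> pareto_set X G \<longleftrightarrow>
     G \<noteq> {} \<and> x \<in> X \<and> \<not> (\<exists>y\<in>X. (\<forall>f\<in>G. f y \<le> f x) \<and> (\<exists>f\<in>G. f y < f x))"
  by (auto simp: pareto_set_def)

lemma pareto_set_subset: "pareto_set X G \<subseteq> X"
  by (auto simp: pareto_set_def)

lemma pareto_set_undominated:
  assumes "x \<in> pareto_set X G" "y \<in> X" "\<forall>f\<in>G. f y \<le> f x" "f \<in> G"
  shows "\<not> f y < f x"
  using assms unfolding mem_pareto_set_iff by blast

lemma pareto_set_same_values: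
  assumes "x \<in> pareto_set X G" "y \<in> X" "\<forall>f\<in>G. f y = f x"
  shows "y \<in> pareto_set X G"
proof -
  have "(\<forall>f\<in>G. f z \<le> f y) \<longleftrightarrow> (\<forall>f\<in>G. f z \<le> f x)" "(\<exists>f\<in>G. f z < f y) \<longleftrightarrow> (\<exists>f\<in>G. f z < f x)" for z
    using assms(3) by (auto intro!: ball_cong bex_cong)
  with assms(1,2) show ?thesis
    unfolding mem_pareto_set_iff by (simp only: simp_thms)
qed

lemma eval_map_eq_iff: "eval_map G x = eval_map G y \<longleftrightarrow> (\<forall>f\<in>G. f x = f y)"
  by (auto simp: eval_map_def fun_eq_iff)

lemma pareto_set_mono:
  assumes "G \<subseteq> F" "inj_on (eval_map G) (pareto_set X G)"
  shows "pareto_set X G \<subseteq> pareto_set X F"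
proof
  fix x assume x: "x \<in> pareto_set X G"
  show "x \<in> pareto_set X F"
  proof (rule ccontr)
    assume "x \<notin> pareto_set X F"
    moreover have "F \<noteq> {}" "x \<in> X"
      using x assms(1) unfolding mem_pareto_set_iff by blast+
    ultimately obtain y where y: "y \<in> X" "\<forall>f\<in>F. f y \<le> f x" "\<exists>f\<in>F. f y < f x"
      unfolding mem_pareto_set_iff by blast
    have "\<forall>f\<in>G. f y = f x"
    proof
      fix f assume "f \<in> G"
      then have "f y \<le> f x" "\<not> f y < f x"
        using pareto_set_undominated[OF x y(1)] y(2) assms(1) by blast+
      then show "f y = f x"
        by simp
    qed
    then have "y \<in> pareto_set X G" "eval_map G y = eval_map G x"
      using pareto_set_same_values[OF x y(1)] by (auto simp: eval_map_eq_iff)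
    then have "y = x"
      using assms(2) x by (auto dest: inj_onD)
    with y(3) show False
      by blast
  qed
qed

lemma pareto_set_eq_on_remaining_objective:
  assumes "y \<in> pareto_set X F" "y' \<in> pareto_set X F" "j \<in> F" "\<forall>f\<in>F - {j}. f y = f y'"
  shows "j y = j y'"
proof (rule ccontr)
  have "y \<in> X" "y' \<in> X"
    using assms(1,2) pareto_set_subset[of X F] by blast+
  assume "j y \<noteq> j y'"
  then consider "j y < j y'" | "j y' < j y"
    by linarith
  then show False
  proof cases
    case 1
    then have "\<forall>f\<in>F. f y \<le> f y'"
      using assms(4) by (metis DiffI less_imp_le order_refl singletonD)
    then have "\<not> j y < j y'"
      by (rule pareto_set_undominated[OF assms(2) \<open>y \<in> X\<close> _ assms(3)])
    with 1 show False
      by simp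
  next
    case 2
    then have "\<forall>f\<in>F. f y' \<le> f y"
      using assms(4) by (metis DiffI less_imp_le order_refl singletonD)
    then have "\<not> j y' < j y"
      by (rule pareto_set_undominated[OF assms(1) \<open>y' \<in> X\<close> _ assms(3)])
    with 2 show False
      by simp
  qed
qed

definition objective_vector :: "nat \<Rightarrow> (nat \<Rightarrow> 'a \<Rightarrow> real) \<Rightarrow> 'a \<Rightarrow> nat \<Rightarrow> real" where
  "objective_vector n c x = (\<lambda>i. if i < n then c i x else 0)"

lemma objective_vector_in_Rk: "objective_vector n c x \<in> Rk n"
  by (simp add: objective_vector_def Rk_def)

lemma objective_vector_eq_iff:
  "objective_vector n c x = objective_vector n c y \<longleftrightarrow> (\<forall>i<n. c i x = c i y)"
  by (auto simp: objective_vector_def fun_eq_iff)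

lemma continuous_on_objective_vector:
  assumes "\<And>i. i < n \<Longrightarrow> continuous_on S (c i)"
  shows "continuous_on S (objective_vector n c)"
  unfolding objective_vector_def
proof (intro continuous_on_coordinatewise_then_product)
  show "continuous_on S (\<lambda>x. if i < n then c i x else 0)" for i
    using assms by (cases "i < n") simp_all
qed

lemma pareto_set_not_in_openin_objective_image:
  assumes "x \<in> pareto_set X G" "G \<subseteq> c ` {..<n}" "x \<in> U" "U \<subseteq> X"
    and "openin (top_of_set (Rk n)) (objective_vector n c ` U)"
  shows False
proof -
  obtain a where a: "a < n" "c a \<in> G"
    using assms(1,2) unfolding mem_pareto_set_iff by blast
  obtain t where t: "t < 0"
    "(objective_vector n c x)(a := objective_vector n c x a + t) \<in> objective_vector n c ` U"
    using openin_Rk_decrease_coordinate[OF assms(5) imageI[OF assms(3)] a(1)] by blast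
  then obtain y where "y \<in> U"
    and y: "objective_vector n c y = (objective_vector n c x)(a := objective_vector n c x a + t)"
    by (metis imageE)
  have c_y: "c i y = c i x + (if i = a then t else 0)" if "i < n" for i
    using fun_cong[OF y, of i] that a(1) by (auto simp: objective_vector_def)
  have "\<forall>f\<in>G. f y \<le> f x"
  proof
    fix f assume "f \<in> G"
    then obtain i where "i < n" "f = c i"
      using assms(2) by blast
    then show "f y \<le> f x"
      using c_y t(1) by simp
  qed
  moreover have "y \<in> X"
    using \<open>y \<in> U\<close> assms(4) by blast
  ultimately have "\<not> c a y < c a x"
    using pareto_set_undominated[OF assms(1)] a(2) by blast
  with c_y[OF a(1)] t(1) show False
    by simp
qed

lemma simple_problemD:
  assumes "simple_problem X F" "G \<subseteq> F"
  shows "finite F" "pareto_set X G homeomorphic std_simplex (card G)"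
    and "\<exists>h. homeomorphism (pareto_set X G) (eval_map G ` pareto_set X G) (eval_map G) h"
  using assms unfolding simple_problem_def topological_embedding_on_def by simp_all

lemma simple_problem_inj_on_eval_map:
  assumes "simple_problem X F" "G \<subseteq> F"
  shows "inj_on (eval_map G) (pareto_set X G)"
  using simple_problemD(3)[OF assms] homeomorphism_inj_on by blast

lemma simple_problem_continuous_on_objective:
  assumes "simple_problem X F" "f \<in> F"
  shows "continuous_on (pareto_set X F) f"
proof -
  have "continuous_on (pareto_set X F) (eval_map F)"
    using simple_problemD(3)[OF assms(1) order_refl] homeomorphism_cont1 by blast
  then have "continuous_on (pareto_set X F) (\<lambda>x. eval_map F x f)"
    by (rule continuous_on_product_then_coordinatewise)
  with assms(2) show ?thesis
    by (simp add: eval_map_def)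
qed

lemma simple_problem_drop_objective_embedding:
  assumes "simple_problem X F" "j \<in> F" "c ` {..<n} = F - {j}"
  shows "continuous_on (pareto_set X F) (objective_vector n c)"
    and "inj_on (objective_vector n c) (pareto_set X F)"
proof -
  show "continuous_on (pareto_set X F) (objective_vector n c)"
    using assms(1,3) by (intro continuous_on_objective_vector simple_problem_continuous_on_objective) auto
  show "inj_on (objective_vector n c) (pareto_set X F)"
  proof (rule inj_onI)
    fix y y' assume yy': "y \<in> pareto_set X F" "y' \<in> pareto_set X F"
      and "objective_vector n c y = objective_vector n c y'"
    then have "\<forall>f\<in>F - {j}. f y = f y'"
      unfolding assms(3)[symmetric] by (simp add: objective_vector_eq_iff)
    moreover from this have "j y = j y'"
      by (rule pareto_set_eq_on_remaining_objective[OF yy' assms(2)])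
    ultimately have "eval_map F y = eval_map F y'"
      by (auto simp: eval_map_eq_iff)
    then show "y = y'"
      using simple_problem_inj_on_eval_map[OF assms(1) order_refl] yy' by (auto dest: inj_onD)
  qed
qed

lemma finite_enumerate_Diff_singleton:
  assumes "finite F" "j \<in> F"
  obtains n and c :: "nat \<Rightarrow> 'a" where "card F = Suc n" "c ` {..<n} = F - {j}"
proof -
  obtain c where "bij_betw c {0..<card (F - {j})} (F - {j})"
    using ex_bij_betw_nat_finite assms(1) finite_Diff by blast
  then show ?thesis
    using that[of "card (F - {j})" c] card_Suc_Diff1[OF assms] by (simp add: bij_betw_def atLeast0LessThan)
qed

theorem corollary3:
  fixes X :: "'a::euclidean_space set" and F G :: "('a \<Rightarrow> real) set"
  assumes "simple_problem X F"
    and "G \<subset> F"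
  shows "pareto_set X G \<subseteq> manifold_boundary (pareto_set X F)"
proof
  fix x assume x: "x \<in> pareto_set X G"
  obtain j where j: "j \<in> F" "j \<notin> G"
    using assms(2) by blast
  obtain n c where "card F = Suc n" and c: "c ` {..<n} = F - {j}"
    using finite_enumerate_Diff_singleton[OF simple_problemD(1)[OF assms(1) order_refl] j(1)] .
  then have P: "pareto_set X F homeomorphic std_simplex (Suc n)"
    using simple_problemD(2)[OF assms(1) order_refl] by simp
  have "x \<in> pareto_set X F"
    using pareto_set_mono[OF _ simple_problem_inj_on_eval_map[OF assms(1)]] assms(2) x by blast
  moreover have "x \<notin> manifold_interior (pareto_set X F)"
  proof
    assume "x \<in> manifold_interior (pareto_set X F)"
    moreover have "objective_vector n c ` pareto_set X F \<subseteq> Rk n"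
      by (simp add: image_subset_iff objective_vector_in_Rk)
    ultimately obtain U where "U \<subseteq> pareto_set X F" "x \<in> U"
      "openin (top_of_set (Rk n)) (objective_vector n c ` U)"
      using manifold_interior_inj_image_openin[OF P simple_problem_drop_objective_embedding[OF assms(1) j(1) c]]
      by blast
    moreover have "G \<subseteq> c ` {..<n}"
      using c j(2) assms(2) by blast
    ultimately show False
      using x pareto_set_subset[of X F] by (blast intro: pareto_set_not_in_openin_objective_image)
  qed
  ultimately show "x \<in> manifold_boundary (pareto_set X F)"
    by (simp add: manifold_boundary_def)
qed

end
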